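(* Let $a$ and $b$ be relatively prime integers with $1<a<b$, let $(u,v)$ be the definitely least solution of the Diophantine equation $ax+by=1$, and let $S=\langle a,b\rangle=\{\lambda_1a+\lambda_2b:\lambda_1,\lambda_2\in\mathbb{N}\}$. Then the number of isolated gaps of $S$ is $\#I(S)=|uv|$.
   Context: $\mathbb{N}$ denotes the set of nonnegative integers. A gap of a numerical semigroup $S\subseteq\mathbb{N}$ is an element of $\mathbb{N}\setminus S$. An isolated gap of $S$ is a gap $x$ of $S$ such that $x-1\in S$ and $x+1\in S$; $I(S)$ denotes the set of isolated gaps of $S$. For relatively prime positive integers $a,b$, a solution $(u,v)\in\mathbb{Z}^2$ of $ax+by=1$ is the definitely least solution if both $|u|$ and $|v|$ attain their least possible values among all integer solutions; such a solution exists and is unique, and a solution $(x_0,y_0)$ is the definitely least solution if and only if $|x_0|\le b/2$ and $|y_0|\le a/2$. *)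

theory Defs
  imports Main
begin

definition gen2 :: "nat \<Rightarrow> nat \<Rightarrow> nat set" where
  "gen2 a b = {l1 * a + l2 * b | l1 l2. True}"

definition gaps :: "nat set \<Rightarrow> nat set" where
  "gaps S = UNIV - S"

definition isolated_gaps :: "nat set \<Rightarrow> nat set" where
  "isolated_gaps S = {x \<in> gaps S. x \<ge> 1 \<and> x - 1 \<in> S \<and> x + 1 \<in> S}"

definition definitely_least_solution :: "int \<Rightarrow> int \<Rightarrow> int \<Rightarrow> int \<Rightarrow> bool" where
  "definitely_least_solution a b u v \<longleftrightarrow>
     a * u + b * v = 1 \<and>
     (\<forall>x y. a * x + b * y = 1 \<longrightarrow> \<bar>u\<bar> \<le> \<bar>x\<bar> \<and> \<bar>v\<bar> \<le> \<bar>y\<bar>)"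

end

theory Submission
  imports Defs
begin

text \<open>Every integer is uniquely \<open>\<alpha> a + \<beta> b\<close> with \<open>0 \<le> \<alpha> < b\<close>, and it lies in
  \<open>S = \<langle>a, b\<rangle>\<close> iff \<open>\<beta> \<ge> 0\<close>. After swapping \<open>a\<close> and \<open>b\<close> if necessary, \<open>u > 0 > v\<close>, and
  minimality gives \<open>2u \<le> b\<close>, \<open>-2v \<le> a\<close>. Adding \<open>1 = a u + b v\<close> shifts \<open>\<alpha>\<close> by \<open>u\<close> and \<open>\<beta>\<close>
  by \<open>v\<close>, plus \<open>a\<close> when \<open>\<alpha>\<close> wraps around modulo \<open>b\<close>. Hence \<open>n\<close> is an isolated gap iff
  \<open>b - u \<le> \<alpha> < b\<close> and \<open>v \<le> \<beta> < 0\<close>: a box with \<open>|u v|\<close> points.\<close>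

lemma gen2_commute: "gen2 a b = gen2 b a"
  unfolding gen2_def by (auto intro: add.commute)

text \<open>In \<open>int\<close> there is no truncated subtraction, and \<open>n - 1 \<in> int ` S\<close> already forces
  \<open>n \<ge> 1\<close>.\<close>

lemma int_isolated_gaps:
  "int ` isolated_gaps S = {n. n \<notin> int ` S \<and> n - 1 \<in> int ` S \<and> n + 1 \<in> int ` S}"
proof (intro set_eqI iffI)
  fix n assume "n \<in> int ` isolated_gaps S"
  then obtain x where x: "n = int x" "x \<notin> S" "1 \<le> x" "x - 1 \<in> S" "x + 1 \<in> S"
    unfolding isolated_gaps_def gaps_def by auto
  have "int x \<notin> int ` S" using x(2) by (simp add: inj_image_mem_iff)
  moreover have "int (x - 1) \<in> int ` S" "int (x + 1) \<in> int ` S"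
    using x(4,5) by blast+
  moreover have "int (x - 1) = n - 1" "int (x + 1) = n + 1" using x(1,3) by simp_all
  ultimately show "n \<in> {n. n \<notin> int ` S \<and> n - 1 \<in> int ` S \<and> n + 1 \<in> int ` S}"
    using x(1) by (simp add: add.commute)
next
  fix n assume "n \<in> {n. n \<notin> int ` S \<and> n - 1 \<in> int ` S \<and> n + 1 \<in> int ` S}"
  then have n: "n \<notin> int ` S" "n - 1 \<in> int ` S" "n + 1 \<in> int ` S" by simp_all
  from n(2) obtain y where y: "y \<in> S" "n - 1 = int y" by (rule imageE) simp
  then have ny: "n = int (Suc y)" by simp
  have "Suc y \<notin> S" using n(1) unfolding ny by blast
  moreover have "n + 1 = int (Suc (Suc y))" using ny by simp
  with n(3) have "Suc (Suc y) \<in> S" by (simp only: inj_image_mem_iff[OF inj_of_nat])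
  ultimately show "n \<in> int ` isolated_gaps S"
    using y(1) unfolding ny isolated_gaps_def gaps_def by (intro imageI) auto
qed

lemma mem_int_gen2_reduced_iff:
  assumes "coprime a b" "0 \<le> \<alpha>" "\<alpha> < int b"
  shows "\<alpha> * int a + \<beta> * int b \<in> int ` gen2 a b \<longleftrightarrow> 0 \<le> \<beta>"
proof
  assume "0 \<le> \<beta>"
  with assms(2) have "\<alpha> * int a + \<beta> * int b = int (nat \<alpha> * a + nat \<beta> * b)" by simp
  then show "\<alpha> * int a + \<beta> * int b \<in> int ` gen2 a b" unfolding gen2_def by blast
next
  assume "\<alpha> * int a + \<beta> * int b \<in> int ` gen2 a b"
  then obtain l1 l2 where "\<alpha> * int a + \<beta> * int b = int (l1 * a + l2 * b)"
    unfolding gen2_def by blast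
  then have eq: "(\<alpha> - int l1) * int a = (int l2 - \<beta>) * int b" by (simp add: algebra_simps)
  then have "int b dvd (\<alpha> - int l1) * int a" by simp
  moreover have "coprime (int b) (int a)" using assms(1) by (simp add: coprime_commute)
  ultimately have "int b dvd \<alpha> - int l1" by (simp add: coprime_dvd_mult_left_iff)
  then obtain k where k: "\<alpha> - int l1 = int b * k" by (rule dvdE)
  have "int b > 0" using assms(2,3) by simp
  moreover have "k * int a * int b = (int l2 - \<beta>) * int b" using eq k by (simp add: algebra_simps)
  ultimately have ka: "k * int a = int l2 - \<beta>" by simp
  show "0 \<le> \<beta>"
  proof (rule ccontr)
    assume "\<not> 0 \<le> \<beta>"
    with ka have "0 < k * int a" by simp
    then have "0 < k" by (simp add: zero_less_mult_iff)
    with k \<open>int b > 0\<close> have "int b \<le> \<alpha> - int l1" by simp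
    with assms(3) show False by simp
  qed
qed

lemma mem_int_gen2_iff:
  assumes "coprime a b" "0 < b"
  shows "\<alpha> * int a + \<beta> * int b \<in> int ` gen2 a b \<longleftrightarrow> 0 \<le> \<beta> + \<alpha> div int b * int a"
proof -
  define q r where "q = \<alpha> div int b" and "r = \<alpha> mod int b"
  then have "\<alpha> = q * int b + r" by simp
  then have "\<alpha> * int a + \<beta> * int b = r * int a + (\<beta> + q * int a) * int b"
    by (simp add: algebra_simps)
  then show ?thesis unfolding q_def r_def
    using mem_int_gen2_reduced_iff[OF assms(1)] assms(2) by simp
qed

lemma ex_reduced_repr:
  fixes a b u v n :: int
  assumes "a * u + b * v = 1" "0 < b"
  shows "\<exists>\<alpha> \<beta>. 0 \<le> \<alpha> \<and> \<alpha> < b \<and> n = \<alpha> * a + \<beta> * b"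
proof (intro exI conjI)
  show "0 \<le> n * u mod b" "n * u mod b < b" using assms(2) by simp_all
  define q r where "q = n * u div b" and "r = n * u mod b"
  then have "n * u = q * b + r" by simp
  have "n = n * (a * u + b * v)" using assms(1) by simp
  also have "\<dots> = (n * u) * a + n * v * b" by (simp add: algebra_simps)
  also have "\<dots> = r * a + (q * a + n * v) * b"
    unfolding \<open>n * u = q * b + r\<close> by (simp add: algebra_simps)
  finally show "n = n * u mod b * a + (n * u div b * a + n * v) * b" unfolding q_def r_def .
qed

lemma inj_on_reduced_repr:
  fixes a b :: int
  assumes "coprime a b"
  shows "inj_on (\<lambda>(\<alpha>, \<beta>). \<alpha> * a + \<beta> * b) ({0..<b} \<times> UNIV)"
proof (rule inj_onI, clarsimp)
  fix \<alpha> \<beta> \<alpha>' \<beta>'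
  assume ranges: "0 \<le> \<alpha>" "\<alpha> < b" "0 \<le> \<alpha>'" "\<alpha>' < b"
    and "\<alpha> * a + \<beta> * b = \<alpha>' * a + \<beta>' * b"
  then have eq: "(\<alpha> - \<alpha>') * a = (\<beta>' - \<beta>) * b" by (simp add: algebra_simps)
  then have "b dvd (\<alpha> - \<alpha>') * a" by simp
  moreover have "coprime b a" using assms by (simp add: coprime_commute)
  ultimately have "b dvd \<alpha> - \<alpha>'" by (simp add: coprime_dvd_mult_left_iff)
  then have "\<alpha> = \<alpha>'"
    using dvd_imp_le_int[of "\<alpha> - \<alpha>'" b] ranges by fastforce
  with eq ranges show "\<alpha> = \<alpha>' \<and> \<beta> = \<beta>'" by simp
qed

lemma isolated_gap_reduced_repr_iff:
  assumes cop: "coprime a b" and sol: "int a * u + int b * v = 1"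
    and "0 < u" "v < 0" "2 * u \<le> int b" "- 2 * v \<le> int a"
    and "0 \<le> \<alpha>" "\<alpha> < int b"
  shows "\<alpha> * int a + \<beta> * int b \<in> int ` isolated_gaps (gen2 a b) \<longleftrightarrow>
    int b - u \<le> \<alpha> \<and> v \<le> \<beta> \<and> \<beta> < 0"
proof -
  let ?S = "int ` gen2 a b" and ?n = "\<alpha> * int a + \<beta> * int b"
  have "0 < b" using assms by simp
  note mem = mem_int_gen2_iff[OF cop \<open>0 < b\<close>]
  have "?n + 1 = (\<alpha> + u) * int a + (\<beta> + v) * int b"
    and "?n - 1 = (\<alpha> - u) * int a + (\<beta> - v) * int b"
    using sol by (simp_all add: algebra_simps)
  have gap: "?n \<notin> ?S \<longleftrightarrow> \<beta> < 0"
    using mem assms by (simp add: not_le)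
  have "(\<alpha> + u) div int b = (if \<alpha> + u < int b then 0 else 1)"
    using assms div_pos_geq[of "int b" "\<alpha> + u"] by simp
  then have succ: "?n + 1 \<in> ?S \<longleftrightarrow> (if \<alpha> + u < int b then 0 \<le> \<beta> + v else 0 \<le> \<beta> + v + int a)"
    unfolding \<open>?n + 1 = _\<close> mem by simp
  have pred: "?n - 1 \<in> ?S \<longleftrightarrow> v \<le> \<beta>" if "u \<le> \<alpha>"
    unfolding \<open>?n - 1 = _\<close> mem using that assms by simp
  show ?thesis
  proof
    assume "?n \<in> int ` isolated_gaps (gen2 a b)"
    then have "\<beta> < 0" "?n + 1 \<in> ?S" "?n - 1 \<in> ?S"
      unfolding int_isolated_gaps using gap by simp_all
    moreover from this have "int b - u \<le> \<alpha>"
      using succ \<open>v < 0\<close> by (auto split: if_splits)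
    ultimately show "int b - u \<le> \<alpha> \<and> v \<le> \<beta> \<and> \<beta> < 0"
      using pred assms by simp
  next
    assume "int b - u \<le> \<alpha> \<and> v \<le> \<beta> \<and> \<beta> < 0"
    with assms show "?n \<in> int ` isolated_gaps (gen2 a b)"
      unfolding int_isolated_gaps using gap succ pred by simp
  qed
qed

lemma card_isolated_gaps_gen2:
  assumes "coprime a b" "int a * u + int b * v = 1"
    and "0 < u" "v < 0" "2 * u \<le> int b" "- 2 * v \<le> int a"
  shows "card (isolated_gaps (gen2 a b)) = nat \<bar>u * v\<bar>"
proof -
  define repr where "repr = (\<lambda>(\<alpha>, \<beta>). \<alpha> * int a + \<beta> * int b)"
  define box where "box = {int b - u..<int b} \<times> {v..<0}"
  have "0 < int b" using assms by simp
  have box_reduced: "box \<subseteq> {0..<int b} \<times> UNIV"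
    using assms unfolding box_def by auto
  have "int ` isolated_gaps (gen2 a b) = repr ` box"
  proof (intro set_eqI iffI)
    fix n assume n: "n \<in> int ` isolated_gaps (gen2 a b)"
    obtain \<alpha> \<beta> where "0 \<le> \<alpha>" "\<alpha> < int b" "n = \<alpha> * int a + \<beta> * int b"
      using ex_reduced_repr[OF assms(2) \<open>0 < int b\<close>] by blast
    with n show "n \<in> repr ` box"
      using isolated_gap_reduced_repr_iff[OF assms] unfolding repr_def box_def by auto
  next
    fix n assume "n \<in> repr ` box"
    then obtain \<alpha> \<beta> where "(\<alpha>, \<beta>) \<in> box" "n = \<alpha> * int a + \<beta> * int b"
      unfolding repr_def by auto
    moreover from this have "0 \<le> \<alpha>" "\<alpha> < int b" using box_reduced by auto
    ultimately show "n \<in> int ` isolated_gaps (gen2 a b)"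
      using isolated_gap_reduced_repr_iff[OF assms] unfolding box_def by auto
  qed
  then have "card (isolated_gaps (gen2 a b)) = card (repr ` box)"
    by (metis card_image inj_on_of_nat)
  also have "\<dots> = card box"
    using assms(1) inj_on_subset[OF inj_on_reduced_repr box_reduced]
    by (simp add: card_image repr_def)
  also have "\<dots> = nat u * nat (- v)"
    by (simp add: box_def card_cartesian_product)
  also have "\<dots> = nat \<bar>u * v\<bar>"
    using assms by (simp add: abs_mult flip: nat_mult_distrib)
  finally show ?thesis .
qed

lemma definitely_least_solution_bounds:
  assumes "definitely_least_solution a b u v" "a \<noteq> 0" "b \<noteq> 0"
  shows "2 * \<bar>u\<bar> \<le> \<bar>b\<bar>" "2 * \<bar>v\<bar> \<le> \<bar>a\<bar>"
proof -
  have sol: "a * u + b * v = 1"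
    and least: "\<And>x y. a * x + b * y = 1 \<Longrightarrow> \<bar>u\<bar> \<le> \<bar>x\<bar> \<and> \<bar>v\<bar> \<le> \<bar>y\<bar>"
    using assms(1) unfolding definitely_least_solution_def by auto
  have "\<bar>u\<bar> \<le> \<bar>u - b\<bar>" "\<bar>v\<bar> \<le> \<bar>v + a\<bar>"
    using least[of "u - b" "v + a"] sol by (simp_all add: algebra_simps)
  moreover have "\<bar>u\<bar> \<le> \<bar>u + b\<bar>" "\<bar>v\<bar> \<le> \<bar>v - a\<bar>"
    using least[of "u + b" "v - a"] sol by (simp_all add: algebra_simps)
  ultimately show "2 * \<bar>u\<bar> \<le> \<bar>b\<bar>" "2 * \<bar>v\<bar> \<le> \<bar>a\<bar>"
    using assms(2,3) by arith+
qed

lemma bezout_one_opposite_signs: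
  fixes a b u v :: int
  assumes sol: "a * u + b * v = 1" and "1 < a" "1 < b"
  shows "u * v < 0"
proof -
  have "u \<noteq> 0" "v \<noteq> 0"
    using sol assms(2,3) pos_zmult_eq_1_iff[of a u] pos_zmult_eq_1_iff[of b v] by auto
  moreover have "\<not> (0 < u \<and> 0 < v)"
  proof
    assume "0 < u \<and> 0 < v"
    with assms(2,3) have "a \<le> a * u" "b \<le> b * v" by simp_all
    with sol assms(2,3) show False by linarith
  qed
  moreover have "\<not> (u < 0 \<and> v < 0)"
  proof
    assume "u < 0 \<and> v < 0"
    with assms(2,3) have "a * u < 0" "b * v < 0" by (simp_all add: mult_pos_neg)
    with sol show False by linarith
  qed
  ultimately show ?thesis by (auto simp: mult_less_0_iff)
qed

theorem theorem3p4:
  fixes a b :: nat and u v :: int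
  assumes "coprime a b" and "1 < a" and "a < b"
    and "definitely_least_solution (int a) (int b) u v"
  shows "card (isolated_gaps (gen2 a b)) = nat \<bar>u * v\<bar>"
proof -
  have sol: "int a * u + int b * v = 1"
    using assms(4) unfolding definitely_least_solution_def by simp
  have "2 * \<bar>u\<bar> \<le> int b" "2 * \<bar>v\<bar> \<le> int a"
    using definitely_least_solution_bounds[OF assms(4)] assms(2,3) by simp_all
  moreover have "u * v < 0"
    using bezout_one_opposite_signs[OF sol] assms(2,3) by simp
  ultimately consider "0 < u" "v < 0" "2 * u \<le> int b" "- 2 * v \<le> int a"
    | "0 < v" "u < 0" "2 * v \<le> int a" "- 2 * u \<le> int b"
    by (auto simp: mult_less_0_iff)
  then show ?thesis
  proof cases
    case 1
    then show ?thesis using card_isolated_gaps_gen2[OF assms(1) sol] by simp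
  next
    case 2
    have "coprime b a" "int b * v + int a * u = 1"
      using assms(1) sol by (simp_all add: coprime_commute add.commute)
    with 2 show ?thesis
      using card_isolated_gaps_gen2[of b a v u] by (simp add: gen2_commute[of b a] mult.commute)
  qed
qed

end
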